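(* For any finite alphabet $\mathfrak{G}$ and any $\mathfrak{G}$-tree $\mathfrak{t}$, the map $\mathbf{V}^\star$ satisfies $\mathbf{V}^\star(\mathfrak{t}) = \sum_{u\in\mathcal{N}^{\mathrm{qm}}(\mathfrak{t})} \mathfrak{t}\downarrow u$.
   Context: $\mathfrak{G}$ is a finite alphabet (letters with arities $\geq 1$). A $\mathfrak{G}$-tree is either the leaf (the tree with no internal node) or $\mathtt{a}[\mathfrak{s}_1,\dots,\mathfrak{s}_{|\mathtt{a}|}]$, a root decorated by $\mathtt{a}\in\mathfrak{G}$ with children $\mathfrak{s}_1,\dots,\mathfrak{s}_{|\mathtt{a}|}$. Nodes are addressed by words of positive integers (root $\epsilon$, $i$-th child of $u$ is $ui$). The linear map $\mathbf{V}^\star$ on formal combinations of $\mathfrak{G}$-trees is defined recursively by: $\mathbf{V}^\star$ of the leaf is $0$; $\mathbf{V}^\star(\mathtt{a}[\mathfrak{s}, \text{leaf},\dots,\text{leaf}]) = \mathfrak{s}$; and $\mathbf{V}^\star(\mathtt{a}[\mathfrak{s}_1,\dots,\mathfrak{s}_{|\mathtt{a}|}]) = \sum_{j\in[2,|\mathtt{a}|]} \mathtt{a}[\mathfrak{s}_1,\dots,\mathfrak{s}_{j-1},\mathbf{V}^\star(\mathfrak{s}_j),\mathfrak{s}_{j+1},\dots,\mathfrak{s}_{|\mathtt{a}|}]$ whenever some $\mathfrak{s}_j$ with $j\geq 2$ is not the leaf. An internal node $u$ of $\mathfrak{t}$ is quasi-maximal if its address contains no letter $1$ and all its children except possibly the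 first one are leaves; $\mathcal{N}^{\mathrm{qm}}(\mathfrak{t})$ is the set of quasi-maximal nodes. If $\mathfrak{t}$ is obtained from a tree $\mathfrak{s}$ by grafting, at its leaf $u$, the tree $\mathtt{a}[\mathfrak{s}', \text{leaf},\dots,\text{leaf}]$ (an internal node decorated by $\mathtt{a}$ whose first child is $\mathfrak{s}'$ and other children are leaves), then the contraction $\mathfrak{t}\downarrow u$ is the tree obtained by grafting $\mathfrak{s}'$ at the leaf $u$ of $\mathfrak{s}$ instead (i.e. the node $u$ is removed and replaced by its first subtree). *)

theory Defs
  imports Main "HOL-Library.Multiset"
begin

text \<open>G-trees: a leaf, or a node decorated by a letter with a list of children.
  Formal combinations of trees (all coefficients occurring here are natural numbers)
  are represented as multisets of trees.\<close>


datatype 'g tree = Leaf | Node 'g "'g tree list"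

lemma size_mem_aux:
  fixes ts :: "'a list" and f :: "'a \<Rightarrow> nat"
  shows "i < length ts \<Longrightarrow> f (ts ! i) < Suc (size_list f ts)"
  using size_list_estimation'[OF nth_mem[of i ts] order_refl, of f] by simp

fun wf_tree :: "'g set \<Rightarrow> ('g \<Rightarrow> nat) \<Rightarrow> 'g tree \<Rightarrow> bool" where
  "wf_tree G ar Leaf = True"
| "wf_tree G ar (Node a ts) =
     (a \<in> G \<and> length ts = ar a \<and> (\<forall>t\<in>set ts. wf_tree G ar t))"

text \<open>The map V-star, extended linearly to multisets.  Children are 0-indexed
  in the list, so the paper's index j in [2,|a|] is the list index j-1 in [1, length-1].\<close>
function Vstar :: "'g tree \<Rightarrow> 'g tree multiset" where
  "Vstar Leaf = {#}"
| "Vstar (Node a ts) =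
     (if ts \<noteq> [] \<and> (\<forall>t\<in>set (tl ts). t = Leaf) then {# hd ts #}
      else if ts = [] then {#}
      else (\<Sum>j\<in>{1..<length ts}. image_mset (\<lambda>s. Node a (ts[j := s])) (Vstar (ts ! j))))"
  by pat_completeness auto
termination
  apply (relation "measure size")
   apply simp
  by (simp add: size_mem_aux)

function nodes :: "'g tree \<Rightarrow> nat list set" where
  "nodes Leaf = {}"
| "nodes (Node a ts) = insert [] (\<Union>i<length ts. (\<lambda>u. Suc i # u) ` nodes (ts ! i))"
  by pat_completeness auto
termination
  apply (relation "measure size")
   apply simp
  by (simp add: size_mem_aux)

fun subtree_at :: "'g tree \<Rightarrow> nat list \<Rightarrow> 'g tree" where
  "subtree_at t [] = t"
| "subtree_at Leaf (i # u) = Leaf"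
| "subtree_at (Node a ts) (i # u) =
     (if 1 \<le> i \<and> i \<le> length ts then subtree_at (ts ! (i - 1)) u else Leaf)"

fun replace_at :: "'g tree \<Rightarrow> nat list \<Rightarrow> 'g tree \<Rightarrow> 'g tree" where
  "replace_at t [] s = s"
| "replace_at Leaf (i # u) s = Leaf"
| "replace_at (Node a ts) (i # u) s =
     (if 1 \<le> i \<and> i \<le> length ts
      then Node a (ts[i - 1 := replace_at (ts ! (i - 1)) u s]) else Node a ts)"

definition qm_nodes :: "'g tree \<Rightarrow> nat list set" where
  "qm_nodes t = {u \<in> nodes t. 1 \<notin> set u \<and>
     (\<exists>a ts. subtree_at t u = Node a ts \<and> (\<forall>s\<in>set (tl ts). s = Leaf))}"

fun first_child :: "'g tree \<Rightarrow> 'g tree" where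
  "first_child Leaf = Leaf"
| "first_child (Node a ts) = (if ts = [] then Leaf else hd ts)"

definition contract :: "'g tree \<Rightarrow> nat list \<Rightarrow> 'g tree" where
  "contract t u = replace_at t u (first_child (subtree_at t u))"

end

theory Submission
  imports Defs
begin

text \<open>Both sides satisfy the recursion defining \<open>V\<^sup>\<star>\<close> at the root. If all children of the
  root except the first are leaves, the root is the only quasi-maximal node (leaves have no
  nodes), and contracting it yields the first child. Otherwise the root is not quasi-maximal,
  the quasi-maximal nodes are exactly the addresses \<open>j u\<close> with \<open>j \<ge> 2\<close> and \<open>u\<close> quasi-maximal
  in the \<open>j\<close>-th child, and contracting at \<open>j u\<close> is contracting the \<open>j\<close>-th child at \<open>u\<close>.
  Positive arities are needed because a nullary root would be quasi-maximal although
  \<open>V\<^sup>\<star>\<close> vanishes on it.\<close>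

lemma mset_set_UN_disjoint:
  assumes "finite I" "\<forall>i\<in>I. finite (A i)" "\<forall>i\<in>I. \<forall>j\<in>I. i \<noteq> j \<longrightarrow> A i \<inter> A j = {}"
  shows "mset_set (\<Union>i\<in>I. A i) = (\<Sum>i\<in>I. mset_set (A i))"
  using sum.UNION_disjoint[OF assms, of "\<lambda>x. {#x#}"] by simp

lemma image_mset_sum: "image_mset f (\<Sum>i\<in>I. M i) = (\<Sum>i\<in>I. image_mset f (M i))"
  by (induction I rule: infinite_finite_induct) auto

lemma nth_in_set_tl: "j \<in> {1..<length ts} \<Longrightarrow> ts ! j \<in> set (tl ts)"
  by (cases j) (auto simp: nth_tl[symmetric])

lemma finite_qm_nodes: "finite (qm_nodes t)"
proof -
  have "finite (nodes t)"
    by (induction t) auto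
  then show ?thesis
    unfolding qm_nodes_def by simp
qed

lemma qm_nodes_Leaf: "qm_nodes Leaf = {}"
  by (simp add: qm_nodes_def)

lemma Nil_mem_qm_nodes_Node: "[] \<in> qm_nodes (Node a ts) \<longleftrightarrow> (\<forall>s\<in>set (tl ts). s = Leaf)"
  by (simp add: qm_nodes_def)

lemma Cons_mem_qm_nodes_Node:
  "i # u \<in> qm_nodes (Node a ts) \<longleftrightarrow> (\<exists>j\<in>{1..<length ts}. i = Suc j \<and> u \<in> qm_nodes (ts ! j))"
  by (cases i) (auto simp: qm_nodes_def)

lemma qm_nodes_Node:
  "qm_nodes (Node a ts) = (if \<forall>s\<in>set (tl ts). s = Leaf then {[]} else {}) \<union>
     (\<Union>j\<in>{1..<length ts}. (#) (Suc j) ` qm_nodes (ts ! j))"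
proof (rule set_eqI)
  fix v
  show "v \<in> qm_nodes (Node a ts) \<longleftrightarrow> v \<in> (if \<forall>s\<in>set (tl ts). s = Leaf then {[]} else {}) \<union>
     (\<Union>j\<in>{1..<length ts}. (#) (Suc j) ` qm_nodes (ts ! j))"
    by (cases v) (auto simp: Nil_mem_qm_nodes_Node Cons_mem_qm_nodes_Node)
qed

lemma qm_nodes_Node_tl_Leaf:
  assumes "\<forall>s\<in>set (tl ts). s = Leaf"
  shows "qm_nodes (Node a ts) = {[]}"
proof -
  have "ts ! j = Leaf" if "j \<in> {1..<length ts}" for j
    using assms nth_in_set_tl[OF that] by blast
  with assms show ?thesis
    by (simp add: qm_nodes_Node qm_nodes_Leaf)
qed

lemma mset_set_qm_nodes_Node_not_tl_Leaf:
  assumes "\<not> (\<forall>s\<in>set (tl ts). s = Leaf)"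
  shows "mset_set (qm_nodes (Node a ts)) =
    (\<Sum>j\<in>{1..<length ts}. image_mset ((#) (Suc j)) (mset_set (qm_nodes (ts ! j))))"
proof -
  have "mset_set (qm_nodes (Node a ts)) =
      (\<Sum>j\<in>{1..<length ts}. mset_set ((#) (Suc j) ` qm_nodes (ts ! j)))"
    unfolding qm_nodes_Node if_not_P[OF assms]
    by (auto intro!: mset_set_UN_disjoint simp: finite_qm_nodes)
  then show ?thesis
    by (simp add: image_mset_mset_set)
qed

lemma contract_Node_Cons:
  "j < length ts \<Longrightarrow> contract (Node a ts) (Suc j # u) = Node a (ts[j := contract (ts ! j) u])"
  by (simp add: contract_def)

lemma image_contract_qm_nodes_Node_not_tl_Leaf:
  assumes "\<not> (\<forall>s\<in>set (tl ts). s = Leaf)"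
  shows "image_mset (contract (Node a ts)) (mset_set (qm_nodes (Node a ts))) =
    (\<Sum>j\<in>{1..<length ts}. image_mset (\<lambda>s. Node a (ts[j := s]))
       (image_mset (contract (ts ! j)) (mset_set (qm_nodes (ts ! j)))))"
  unfolding mset_set_qm_nodes_Node_not_tl_Leaf[OF assms] image_mset_sum
  by (intro sum.cong) (simp_all add: image_mset.compositionality o_def contract_Node_Cons)

theorem proposition2p4:
  fixes G :: "'g set" and ar :: "'g \<Rightarrow> nat" and t :: "'g tree"
  assumes "finite G"
    and "\<forall>a\<in>G. ar a \<ge> 1"
    and "wf_tree G ar t"
  shows "Vstar t = image_mset (contract t) (mset_set (qm_nodes t))"
  using assms(3)
proof (induction t)
  case Leaf
  then show ?case by (simp add: qm_nodes_Leaf)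
next
  case (Node a ts)
  have "ts \<noteq> []"
    using Node.prems assms(2) by auto
  show ?case
  proof (cases "\<forall>s\<in>set (tl ts). s = Leaf")
    case True
    with \<open>ts \<noteq> []\<close> show ?thesis
      by (simp add: qm_nodes_Node_tl_Leaf contract_def)
  next
    case False
    have IH: "Vstar (ts ! j) = image_mset (contract (ts ! j)) (mset_set (qm_nodes (ts ! j)))"
      if "j \<in> {1..<length ts}" for j
      using Node that by simp
    have "Vstar (Node a ts) =
        (\<Sum>j\<in>{1..<length ts}. image_mset (\<lambda>s. Node a (ts[j := s])) (Vstar (ts ! j)))"
      using False \<open>ts \<noteq> []\<close> by auto
    also have "\<dots> = (\<Sum>j\<in>{1..<length ts}. image_mset (\<lambda>s. Node a (ts[j := s]))
        (image_mset (contract (ts ! j)) (mset_set (qm_nodes (ts ! j)))))"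
      using IH by (intro sum.cong) simp_all
    also have "\<dots> = image_mset (contract (Node a ts)) (mset_set (qm_nodes (Node a ts)))"
      using False by (rule image_contract_qm_nodes_Node_not_tl_Leaf[symmetric])
    finally show ?thesis .
  qed
qed

end
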